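(* $\displaystyle\lim_{n\to\infty}\frac{l(2n+1)}{l(2n)}=5.$
   Context: For $n\ge 0$, $c(n)=\sum_{i=0}^{n}\left(\binom{n}{i}\bmod 2\right)2^{i}$, the integer whose binary digits form the $n$-th row of Pascal's triangle modulo $2$ (so $c(0),c(1),\dots=1,3,5,15,17,51,85,255,\dots$); one has $c(2n)\equiv1\pmod4$, and $l(n)=\frac{c(2n)-1}{4}$. (Stated in the paper as a conjecture of R. Stephan and proved there.) *)

theory Defs
  imports Complex_Main
begin

definition pascal_c :: "nat \<Rightarrow> nat" where
  "pascal_c n = (\<Sum>i=0..n. ((n choose i) mod 2) * 2 ^ i)"

text \<open>l n = (c(2n) - 1)/4; c(2n) is 1 mod 4, so the division is exact.\<close>
definition pascal_l :: "nat \<Rightarrow> nat" where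
  "pascal_l n = (pascal_c (2 * n) - 1) div 4"

end

theory Submission
  imports Defs
begin

text \<open>Modulo 2, row 2m of Pascal's triangle is row m with zeros interleaved, and row 2m+1
  is row m with every entry doubled. For the row polynomials R_m(x) this reads
  R_2m(x) = R_m(x^2) and R_2m+1(x) = (1 + x) R_m(x^2). As c(m) = R_m(2), this gives
  c(4n+2) = R_2n+1(4) = 5 R_n(16) = 5 c(4n), so l(2n+1) = 5 l(2n) + 1, while l(2n) grows
  without bound because c(m) \<ge> 2^m.\<close>

lemma even_binomial_double_odd: "even (2 * m choose Suc (2 * j))"
proof (cases m)
  case (Suc m')
  have "Suc (2 * j) * (2 * m choose Suc (2 * j)) = 2 * m * (Suc (2 * m') choose 2 * j)"
    using Suc_times_binomial[of "2 * j" "Suc (2 * m')"] Suc by simp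
  then have "even (Suc (2 * j) * (2 * m choose Suc (2 * j)))"
    by simp
  then show ?thesis
    by simp
qed simp

lemma binomial_double_mod_2: "(2 * m choose 2 * j) mod 2 = (m choose j) mod 2"
proof (induction m arbitrary: j)
  case 0
  show ?case
    by (cases j) simp_all
next
  case (Suc m)
  show ?case
  proof (cases j)
    case (Suc i)
    have "(2 * Suc m choose 2 * j) =
        (2 * m choose 2 * Suc i) + (2 * m choose 2 * i) + 2 * (2 * m choose Suc (2 * i))"
      using Suc by (simp add: numeral_2_eq_2)
    then have "(2 * Suc m choose 2 * j) mod 2 = ((2 * m choose 2 * Suc i) + (2 * m choose 2 * i)) mod 2"
      by simp
    also have "\<dots> = ((m choose Suc i) + (m choose i)) mod 2"
      using Suc.IH[of "Suc i"] Suc.IH[of i] by (metis mod_add_cong)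
    finally show ?thesis
      using Suc by (simp add: add.commute)
  qed simp
qed

lemma binomial_double_Suc_mod_2:
  "(Suc (2 * m) choose 2 * j) mod 2 = (m choose j) mod 2"
  "(Suc (2 * m) choose Suc (2 * j)) mod 2 = (m choose j) mod 2"
proof -
  show "(Suc (2 * m) choose Suc (2 * j)) mod 2 = (m choose j) mod 2"
    using binomial_double_mod_2[of m j] even_binomial_double_odd[of m j] by auto
  show "(Suc (2 * m) choose 2 * j) mod 2 = (m choose j) mod 2"
  proof (cases j)
    case (Suc i)
    then have "(Suc (2 * m) choose 2 * j) = (2 * m choose Suc (2 * i)) + (2 * m choose 2 * j)"
      by simp
    then show ?thesis
      using binomial_double_mod_2[of m j] even_binomial_double_odd[of m i] by auto
  qed simp
qed

definition pascal_row_mod_2 :: "nat \<Rightarrow> 'a::comm_semiring_1 \<Rightarrow> 'a" where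
  "pascal_row_mod_2 m x = (\<Sum>i\<le>m. of_nat ((m choose i) mod 2) * x ^ i)"

lemma pascal_c_eq_pascal_row_mod_2: "pascal_c m = pascal_row_mod_2 m 2"
  by (simp add: pascal_c_def pascal_row_mod_2_def atLeast0AtMost)

lemma pascal_row_mod_2_double: "pascal_row_mod_2 (2 * m) x = pascal_row_mod_2 m (x\<^sup>2)"
proof -
  have "(\<Sum>i\<le>2 * m. of_nat ((2 * m choose i) mod 2) * x ^ i) =
      (\<Sum>i\<le>Suc (2 * m). of_nat ((2 * m choose i) mod 2) * x ^ i)"
    by (simp add: binomial_eq_0)
  also have "\<dots> = (\<Sum>j\<le>m. of_nat ((m choose j) mod 2) * (x\<^sup>2) ^ j)"
    unfolding sum.in_pairs_0
    by (simp add: binomial_double_mod_2 even_binomial_double_odd power_mult)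
  finally show ?thesis
    unfolding pascal_row_mod_2_def .
qed

lemma pascal_row_mod_2_double_Suc:
  "pascal_row_mod_2 (Suc (2 * m)) x = (1 + x) * pascal_row_mod_2 m (x\<^sup>2)"
proof -
  have "pascal_row_mod_2 (Suc (2 * m)) x =
      (\<Sum>j\<le>m. of_nat ((m choose j) mod 2) * (x\<^sup>2) ^ j +
                of_nat ((m choose j) mod 2) * (x * (x\<^sup>2) ^ j))"
    unfolding pascal_row_mod_2_def sum.in_pairs_0
    by (simp only: binomial_double_Suc_mod_2 power_mult power_Suc)
  also have "\<dots> = (1 + x) * pascal_row_mod_2 m (x\<^sup>2)"
    by (simp add: pascal_row_mod_2_def sum_distrib_left algebra_simps)
  finally show ?thesis .
qed

lemma pascal_row_mod_2_eq_1_plus_multiple: "\<exists>r. pascal_row_mod_2 m x = 1 + x * r"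
proof -
  have "{..m} = insert 0 {1..m}"
    by auto
  then have "pascal_row_mod_2 m x = 1 + (\<Sum>i\<in>{1..m}. of_nat ((m choose i) mod 2) * x ^ i)"
    by (simp add: pascal_row_mod_2_def)
  moreover have "x dvd (\<Sum>i\<in>{1..m}. of_nat ((m choose i) mod 2) * x ^ i)"
    by (intro dvd_sum dvd_mult dvd_power) auto
  ultimately show ?thesis
    by (metis dvdE)
qed

lemma pascal_c_ge_power: "2 ^ m \<le> pascal_c m"
proof -
  have "2 ^ m = ((m choose m) mod 2) * 2 ^ m"
    by simp
  also have "\<dots> \<le> pascal_c m"
    unfolding pascal_c_def by (rule member_le_sum) auto
  finally show ?thesis .
qed

lemma pascal_c_4n_plus_2: "pascal_c (4 * n + 2) = 5 * pascal_c (4 * n)"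
proof -
  have "pascal_c (4 * n + 2) = pascal_row_mod_2 (Suc (2 * n)) (4::nat)"
    using pascal_row_mod_2_double[of "Suc (2 * n)" "2::nat"]
    by (simp add: pascal_c_eq_pascal_row_mod_2)
  also have "\<dots> = 5 * pascal_row_mod_2 (2 * n) (4::nat)"
    by (simp only: pascal_row_mod_2_double_Suc pascal_row_mod_2_double) simp
  also have "\<dots> = 5 * pascal_c (4 * n)"
    using pascal_row_mod_2_double[of "2 * n" "2::nat"]
    by (simp add: pascal_c_eq_pascal_row_mod_2)
  finally show ?thesis .
qed

lemma pascal_l_double_Suc: "pascal_l (2 * n + 1) = 5 * pascal_l (2 * n) + 1"
proof -
  obtain r where "pascal_c (4 * n) = 1 + 4 * r"
    using pascal_row_mod_2_eq_1_plus_multiple[of "2 * n" "4::nat"]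
      pascal_row_mod_2_double[of "2 * n" "2::nat"]
    by (auto simp: pascal_c_eq_pascal_row_mod_2)
  then show ?thesis
    using pascal_c_4n_plus_2[of n] by (simp add: pascal_l_def)
qed

lemma pascal_l_double_ge: "n \<le> pascal_l (2 * n)"
proof -
  have "4 * n < pascal_c (4 * n)"
    using less_exp[of "4 * n"] pascal_c_ge_power[of "4 * n"] by linarith
  then show ?thesis
    by (simp add: pascal_l_def div_le_mono[of "4 * n", simplified] less_Suc_eq_le)
qed

theorem mainTheorem10:
  shows "(\<lambda>n. real (pascal_l (2 * n + 1)) / real (pascal_l (2 * n))) \<longlonglongrightarrow> 5"
proof -
  have "filterlim (\<lambda>n. real (pascal_l (2 * n))) at_top sequentially"
    by (rule filterlim_at_top_mono[OF filterlim_real_sequentially]) (use pascal_l_double_ge in auto)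
  then have "(\<lambda>n. 5 + 1 / real (pascal_l (2 * n))) \<longlonglongrightarrow> 5 + 0"
    by (intro tendsto_add tendsto_divide_0[OF tendsto_const] filterlim_at_top_imp_at_infinity) auto
  moreover have "\<forall>\<^sub>F n in sequentially.
      5 + 1 / real (pascal_l (2 * n)) = real (pascal_l (2 * n + 1)) / real (pascal_l (2 * n))"
    using eventually_ge_at_top[of 1]
  proof eventually_elim
    case (elim n)
    then have "pascal_l (2 * n) > 0"
      using pascal_l_double_ge[of n] by simp
    moreover have "real (pascal_l (2 * n + 1)) = 5 * real (pascal_l (2 * n)) + 1"
      unfolding pascal_l_double_Suc by simp
    ultimately show ?case
      by (simp add: field_simps)
  qed
  ultimately show ?thesis
    using Lim_transform_eventually by fastforce
qed

end
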